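(* Let $I$ be a finite index set of users. For each $i \in I$ let $p_i \in [0,1]$ and $\Delta p_i \in \mathbb{R}$ with $p_i - \Delta p_i \in [0,1]$. Let $\alpha > 0$ and $\beta > 0$, and define $$J = \{ i \in I : \alpha p_i > \beta \Delta p_i \}, \qquad K = \{ i \in I : \alpha p_i < \beta \Delta p_i \}.$$ Suppose that $\sum_{j \in J} p_j = \sum_{k \in K} p_k$ and that this common value is positive. Define $$\mathscr{A}_1 = \frac{\sum_{j\in J} p_j + \sum_{k \in K} (p_k - \Delta p_k)}{\sum_{j \in J} p_j}, \qquad \mathscr{A}_2 = \frac{\sum_{j\in J} (p_j - \Delta p_j) + \sum_{k \in K} p_k}{\sum_{k \in K} p_k}.$$ Then $\mathscr{A}_1 < \mathscr{A}_2$.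
   Context: Interpretation (real-time bidding for online ads): each $i \in I$ indexes an ad request from a distinct user $u_i$. $p_i$ is the action rate (AR), i.e. the probability that $u_i$ takes the advertiser's desired action if the advertiser's ad is shown; $p_i - \Delta p_i$ is the background AR (probability of the action if the ad is not shown); $\Delta p_i$ is the AR lift. Two bidders bid for the same advertiser in pure second-price auctions with no other candidates: $DSP_1$ uses value-based bidding (bid $\alpha p_i$) and $DSP_2$ uses lift-based bidding (bid $\beta \Delta p_i$). $DSP_1$ wins the users in $J$ (paying $\beta\Delta p_j$), $DSP_2$ wins those in $K$ (paying $\alpha p_k$). Under last-touch attribution, the expected actions attributed to $DSP_1$ and $DSP_2$ are $\sum_J p_j$ and $\sum_K p_k$; the hypothesis says both receive equal attribution. $\mathscr{A}_1$ (resp. $\mathscr{A}_2$) is the expected total number of actions per attributed action if only $DSP_1$ (resp. $DSP_2$) is considered. The theorem states that lift-based bidding yields more actions for the advertiser under equal attribution. *)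

theory Defs
  imports Complex_Main
begin

end

theory Submission
  imports Defs
begin

text \<open>Summing the defining inequalities of the two won sets and using equal attribution gives
  \<open>\<beta> \<Sum>\<^sub>J \<Delta>p < \<alpha> \<Sum>\<^sub>J p = \<alpha> \<Sum>\<^sub>K p < \<beta> \<Sum>\<^sub>K \<Delta>p\<close>, so the value bidder's
  users carry strictly less total lift. Both ratios share the denominator \<open>\<Sum>\<^sub>J p = \<Sum>\<^sub>K p\<close>, and
  their numerators differ exactly by these total lifts.\<close>

lemma sum_strict_mono_scaled:
  fixes f g :: "'a \<Rightarrow> real"
  assumes "finite A" "A \<noteq> {}" "\<And>a. a \<in> A \<Longrightarrow> c * f a < d * g a"
  shows "c * sum f A < d * sum g A"
  using sum_strict_mono[OF assms] by (simp add: sum_distrib_left)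

lemma sum_lift_less_of_equal_value:
  fixes p dp :: "'u \<Rightarrow> real" and \<alpha> \<beta> :: real
  assumes "finite J" "J \<noteq> {}" "\<And>j. j \<in> J \<Longrightarrow> \<beta> * dp j < \<alpha> * p j"
    and "finite K" "K \<noteq> {}" "\<And>k. k \<in> K \<Longrightarrow> \<alpha> * p k < \<beta> * dp k"
    and "\<beta> > 0" and "sum p J = sum p K"
  shows "sum dp J < sum dp K"
proof -
  have "\<beta> * sum dp J < \<alpha> * sum p J"
    using sum_strict_mono_scaled[OF assms(1-3)] .
  also have "\<dots> = \<alpha> * sum p K"
    using assms(8) by simp
  also have "\<dots> < \<beta> * sum dp K"
    using sum_strict_mono_scaled[OF assms(4-6)] .
  finally show ?thesis
    using \<open>\<beta> > 0\<close> by simp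
qed

theorem theorem1:
  fixes I :: "'u set" and p dp :: "'u \<Rightarrow> real" and \<alpha> \<beta> :: real
    and J K :: "'u set"
  assumes "finite I"
    and "\<And>i. i \<in> I \<Longrightarrow> 0 \<le> p i \<and> p i \<le> 1"
    and "\<And>i. i \<in> I \<Longrightarrow> 0 \<le> p i - dp i \<and> p i - dp i \<le> 1"
    and "\<alpha> > 0" and "\<beta> > 0"
    and "J = {i \<in> I. \<alpha> * p i > \<beta> * dp i}"
    and "K = {i \<in> I. \<alpha> * p i < \<beta> * dp i}"
    and "(\<Sum>j\<in>J. p j) = (\<Sum>k\<in>K. p k)"
    and "(\<Sum>j\<in>J. p j) > 0"
  shows "((\<Sum>j\<in>J. p j) + (\<Sum>k\<in>K. p k - dp k)) / (\<Sum>j\<in>J. p j)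
       < ((\<Sum>j\<in>J. p j - dp j) + (\<Sum>k\<in>K. p k)) / (\<Sum>k\<in>K. p k)"
proof -
  have "finite J" "finite K"
    using assms(1,6,7) by auto
  moreover have "J \<noteq> {}" "K \<noteq> {}"
    using assms(8,9) by auto
  ultimately have "sum dp J < sum dp K"
    using sum_lift_less_of_equal_value[of J \<beta> dp \<alpha> p K] assms(5-8) by blast
  then have "(\<Sum>j\<in>J. p j) + (\<Sum>k\<in>K. p k - dp k) < (\<Sum>j\<in>J. p j - dp j) + (\<Sum>k\<in>K. p k)"
    using assms(8) by (simp add: sum_subtractf)
  then show ?thesis
    using assms(8,9) by (simp add: divide_strict_right_mono)
qed

end
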